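(* Let $T$ be a fair transition path, $p\in\mathbb{P}$ a nonfaulty proposer, $Q\in\mathcal{Q}$ a quorum all of whose members are nonfaulty, and $b\in\mathcal{B}$ a proposal number satisfying P1 and P2. If at some index $i$ of $T$ the proposer $p$ has received promises ($1b$ messages) for $b$ from all members of $Q$, then there is an index $j$ such that in the configuration at index $j$ of $T$, $p$ has received votes ($2b$ messages) for $b$ from all members of $Q$.
   Context: Setting: the Synod consensus protocol modeled in a failure-aware actor model. An actor configuration is $\langle\alpha\,\|\,\bar\alpha\,\|\,\mu\rangle$ where $\alpha$ maps available actors to their states, $\bar\alpha$ maps failed actors to their states (states persist across failure), and $\mu$ is the multiset of messages en route. Transitions are base-level ($\mathbf{snd}$: an actor puts a message into $\mu$; $\mathbf{rcv}$: an actor removes a message addressed to it from $\mu$ and processes it; also $\mathbf{fun},\mathbf{new}$), which can only be taken by an available actor, and meta-level ($\mathbf{stp}$: an available actor becomes failed; $\mathbf{bgn}$: a failed actor becomes available). A transition path is a sequence of configurations indexed by natural numbers (logical time), each obtained from the previous by a transition; messages are never lost. Actors are partitioned into proposers $\mathbb{P}$ and acceptors $\mathbb{A}$; a quorum is a nonempty subset of $\mathbb{A}$. A message is a tuple $\langle s,r,k,b,v\rangle$ (sender, receiver, kind $k\in\{1a,1b,2a,2b\}$ = prepare, promise, accept, voted; proposal number $b$; value $v$). The local state of actor $x$ in configuration $\kappa$ consists of the set of received but not yet responded-to messages, the highest proposal number seen, and the value of the highest-numbered accepted proposal. Fair transition paths satisfy: if a $\mathbf{snd}$ or $\mathbf{rcv}$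 transition is enabled for an actor at some index, then either it occurs at some later index or from some later index on it is permanently disabled. Protocol rules: an available acceptor holding an unresponded $1a$ message with number $b$ greater than its highest seen number becomes ready to send a $1b$ (promise) to the sender carrying $b$ and its highest accepted proposal number and value; a proposer that has received $1b$ messages for $b$ from all members of a quorum $Q$ becomes ready to send $2a$ (accept) messages with $b$ and a value chosen from its configuration to all members of $Q$; an available acceptor holding an unresponded $2a$ message with number $b$ at least its highest seen number accepts it and becomes ready to send a $2b$ (voted) message with $b$ and the value to the sender; if a message addressed to an available actor is in $\mu$, a $\mathbf{rcv}$ of it is enabled. An actor $x$ is nonfaulty if: $x$ eventually becomes available whenever there is a message en route that $x$ must receive; $x$ eventually becomes available whenever its local state dictates it must send a message; and any enabled $\mathbf{snd}$ or $\mathbf{rcv}$ transition of $x$ either eventually occurs or is infinitely often enabled. A proposal number $b$ satisfies P1 and P2 if whenever an acceptor receives a prepare message with $b$, $b$ is greater than all proposal numbers that acceptor has previously seen, and whenever an acceptor receives an accept message with $b$, $b$ is greater than or equal to all proposal numbers it has previously seen. *)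

theory Defs
  imports Main "HOL-Library.Multiset"
begin

text \<open>Message kinds: 1a = prepare, 1b = promise, 2a = accept, 2b = voted.\<close>
datatype kind = K1a | K1b | K2a | K2b

text \<open>The value slot carries an optional numbered value: for a 1b message the
  highest-numbered accepted proposal (number and value) of the acceptor, for
  2a/2b messages the pair (b, v); for 1a messages it is None.\<close>
datatype ('a, 'v) msg =
  Msg (src: 'a) (dst: 'a) (knd: kind) (num: nat) (val: "(nat \<times> 'v) option")

text \<open>Local state of an actor:
  rcvd   -- messages received so far;
  out    -- responses the actor's processing has determined but not yet sent
            (i.e. the received-but-not-yet-responded-to messages, represented
             by their pending responses);
  hi     -- highest proposal number seen (None = none yet);
  acc    -- highest-numbered accepted proposal (number, value);
  sent2a -- pairs (acceptor, b) to which the proposer has already sent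
            its accept message for b.\<close>
record ('a, 'v) lstate =
  rcvd   :: "('a, 'v) msg set"
  out    :: "('a, 'v) msg set"
  hi     :: "nat option"
  acc    :: "(nat \<times> 'v) option"
  sent2a :: "('a \<times> nat) set"

definition empty_lstate :: "('a, 'v) lstate" where
  "empty_lstate = \<lparr>rcvd = {}, out = {}, hi = None, acc = None, sent2a = {}\<rparr>"

text \<open>A configuration: the set of available actors (the others are failed),
  the local states of all actors (states persist across failure), and the
  multiset of messages en route.\<close>
record ('a, 'v) config =
  avail :: "'a set"
  st    :: "'a \<Rightarrow> ('a, 'v) lstate"
  mu    :: "('a, 'v) msg multiset"

datatype ('a, 'v) label =
  Snd 'a "('a, 'v) msg" | Rcv 'a "('a, 'v) msg" | Stp 'a | Bgn 'a

definition quorum :: "'a set \<Rightarrow> 'a set \<Rightarrow> bool" where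
  "quorum Acc Q \<longleftrightarrow> Q \<noteq> {} \<and> Q \<subseteq> Acc"

definition gt_opt :: "nat \<Rightarrow> nat option \<Rightarrow> bool" where
  "gt_opt b h = (case h of None \<Rightarrow> True | Some h' \<Rightarrow> h' < b)"

definition ge_opt :: "nat \<Rightarrow> nat option \<Rightarrow> bool" where
  "ge_opt b h = (case h of None \<Rightarrow> True | Some h' \<Rightarrow> h' \<le> b)"

definition choosable :: "'a \<Rightarrow> ('a, 'v) lstate \<Rightarrow> 'a set \<Rightarrow> nat \<Rightarrow> 'v \<Rightarrow> bool" where
  "choosable x s Q b v \<longleftrightarrow>
     (\<forall>q\<in>Q. \<forall>w. Msg q x K1b b w \<in> rcvd s \<longrightarrow> w = None) \<or>
     (\<exists>q\<in>Q. \<exists>n. Msg q x K1b b (Some (n, v)) \<in> rcvd s \<and>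
        (\<forall>q'\<in>Q. \<forall>n' v'. Msg q' x K1b b (Some (n', v')) \<in> rcvd s \<longrightarrow> n' \<le> n))"

definition process :: "'a set \<Rightarrow> 'a \<Rightarrow> ('a, 'v) msg \<Rightarrow> ('a, 'v) lstate \<Rightarrow> ('a, 'v) lstate" where
  "process Acc x m s =
     (let s1 = s\<lparr>rcvd := insert m (rcvd s)\<rparr> in
      if x \<in> Acc \<and> knd m = K1a \<and> gt_opt (num m) (hi s) then
        s1\<lparr>hi := Some (num m),
           out := insert (Msg x (src m) K1b (num m) (acc s)) (out s)\<rparr>
      else if x \<in> Acc \<and> knd m = K2a \<and> ge_opt (num m) (hi s) then
        s1\<lparr>hi := Some (num m), acc := val m,
           out := insert (Msg x (src m) K2b (num m) (val m)) (out s)\<rparr>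
      else s1)"

definition dictates :: "'a set \<Rightarrow> 'a set \<Rightarrow> ('a, 'v) config \<Rightarrow> 'a \<Rightarrow> ('a, 'v) msg \<Rightarrow> bool" where
  "dictates Prop Acc \<kappa> x m \<longleftrightarrow>
     (x \<in> Acc \<and> m \<in> out (st \<kappa> x)) \<or>
     (x \<in> Prop \<and> (\<exists>Q b v q0. quorum Acc Q \<and> q0 \<in> Q \<and>
         (\<forall>q\<in>Q. \<exists>w. Msg q x K1b b w \<in> rcvd (st \<kappa> x)) \<and>
         (q0, b) \<notin> sent2a (st \<kappa> x) \<and> choosable x (st \<kappa> x) Q b v \<and>
         m = Msg x q0 K2a b (Some (b, v))))"

definition after_send :: "'a set \<Rightarrow> ('a, 'v) config \<Rightarrow> 'a \<Rightarrow> ('a, 'v) msg \<Rightarrow> ('a, 'v) config" where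
  "after_send Acc \<kappa> x m =
     \<kappa>\<lparr>mu := mu \<kappa> + {#m#},
       st := (st \<kappa>)(x := (if x \<in> Acc then (st \<kappa> x)\<lparr>out := out (st \<kappa> x) - {m}\<rparr>
                            else (st \<kappa> x)\<lparr>sent2a := insert (dst m, num m) (sent2a (st \<kappa> x))\<rparr>))\<rparr>"

fun step :: "'a set \<Rightarrow> 'a set \<Rightarrow> ('a, 'v) config \<Rightarrow> ('a, 'v) label \<Rightarrow> ('a, 'v) config \<Rightarrow> bool" where
  "step Prop Acc \<kappa> (Snd x m) \<kappa>' \<longleftrightarrow> x \<in> avail \<kappa> \<and>
     ((x \<in> Prop \<and> knd m = K1a \<and> src m = x \<and> dst m \<in> Acc \<and> val m = None \<and>
       \<kappa>' = \<kappa>\<lparr>mu := mu \<kappa> + {#m#}\<rparr>) \<or>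
      (dictates Prop Acc \<kappa> x m \<and> \<kappa>' = after_send Acc \<kappa> x m))"
| "step Prop Acc \<kappa> (Rcv x m) \<kappa>' \<longleftrightarrow> x \<in> avail \<kappa> \<and> m \<in># mu \<kappa> \<and> dst m = x \<and>
     \<kappa>' = \<kappa>\<lparr>mu := mu \<kappa> - {#m#}, st := (st \<kappa>)(x := process Acc x m (st \<kappa> x))\<rparr>"
| "step Prop Acc \<kappa> (Stp x) \<kappa>' \<longleftrightarrow> x \<in> avail \<kappa> \<and> \<kappa>' = \<kappa>\<lparr>avail := avail \<kappa> - {x}\<rparr>"
| "step Prop Acc \<kappa> (Bgn x) \<kappa>' \<longleftrightarrow> x \<notin> avail \<kappa> \<and> \<kappa>' = \<kappa>\<lparr>avail := insert x (avail \<kappa>)\<rparr>"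

definition initial :: "('a, 'v) config \<Rightarrow> bool" where
  "initial \<kappa> \<longleftrightarrow> (\<forall>x. st \<kappa> x = empty_lstate) \<and> mu \<kappa> = {#}"

definition transition_path :: "'a set \<Rightarrow> 'a set \<Rightarrow> (nat \<Rightarrow> ('a, 'v) config) \<Rightarrow> (nat \<Rightarrow> ('a, 'v) label) \<Rightarrow> bool" where
  "transition_path Prop Acc T L \<longleftrightarrow> initial (T 0) \<and> (\<forall>n. step Prop Acc (T n) (L n) (T (Suc n)))"

definition snd_enabled :: "'a set \<Rightarrow> 'a set \<Rightarrow> ('a, 'v) config \<Rightarrow> 'a \<Rightarrow> ('a, 'v) msg \<Rightarrow> bool" where
  "snd_enabled Prop Acc \<kappa> x m \<longleftrightarrow> x \<in> avail \<kappa> \<and> dictates Prop Acc \<kappa> x m"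

definition rcv_enabled :: "('a, 'v) config \<Rightarrow> 'a \<Rightarrow> ('a, 'v) msg \<Rightarrow> bool" where
  "rcv_enabled \<kappa> x m \<longleftrightarrow> x \<in> avail \<kappa> \<and> m \<in># mu \<kappa> \<and> dst m = x"

definition fair_transition_path :: "'a set \<Rightarrow> 'a set \<Rightarrow> (nat \<Rightarrow> ('a, 'v) config) \<Rightarrow> (nat \<Rightarrow> ('a, 'v) label) \<Rightarrow> bool" where
  "fair_transition_path Prop Acc T L \<longleftrightarrow> transition_path Prop Acc T L \<and>
     (\<forall>i x m. snd_enabled Prop Acc (T i) x m \<longrightarrow>
        (\<exists>k\<ge>i. L k = Snd x m) \<or> (\<exists>k\<ge>i. \<forall>n\<ge>k. \<not> snd_enabled Prop Acc (T n) x m)) \<and>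
     (\<forall>i x m. rcv_enabled (T i) x m \<longrightarrow>
        (\<exists>k\<ge>i. L k = Rcv x m) \<or> (\<exists>k\<ge>i. \<forall>n\<ge>k. \<not> rcv_enabled (T n) x m))"

definition nonfaulty :: "'a set \<Rightarrow> 'a set \<Rightarrow> (nat \<Rightarrow> ('a, 'v) config) \<Rightarrow> (nat \<Rightarrow> ('a, 'v) label) \<Rightarrow> 'a \<Rightarrow> bool" where
  "nonfaulty Prop Acc T L x \<longleftrightarrow>
     (\<forall>i m. m \<in># mu (T i) \<and> dst m = x \<longrightarrow> (\<exists>j\<ge>i. x \<in> avail (T j))) \<and>
     (\<forall>i m. dictates Prop Acc (T i) x m \<longrightarrow> (\<exists>j\<ge>i. x \<in> avail (T j))) \<and>
     (\<forall>i m. snd_enabled Prop Acc (T i) x m \<longrightarrow>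
        (\<exists>k\<ge>i. L k = Snd x m) \<or> (\<forall>n. \<exists>k\<ge>n. snd_enabled Prop Acc (T k) x m)) \<and>
     (\<forall>i m. rcv_enabled (T i) x m \<longrightarrow>
        (\<exists>k\<ge>i. L k = Rcv x m) \<or> (\<forall>n. \<exists>k\<ge>n. rcv_enabled (T k) x m))"

definition P1_P2 :: "'a set \<Rightarrow> (nat \<Rightarrow> ('a, 'v) config) \<Rightarrow> (nat \<Rightarrow> ('a, 'v) label) \<Rightarrow> nat \<Rightarrow> bool" where
  "P1_P2 Acc T L b \<longleftrightarrow>
     (\<forall>n a m. a \<in> Acc \<and> L n = Rcv a m \<and> num m = b \<longrightarrow>
        (knd m = K1a \<longrightarrow> (\<forall>m'\<in>rcvd (st (T n) a). num m' < b)) \<and>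
        (knd m = K2a \<longrightarrow> (\<forall>m'\<in>rcvd (st (T n) a). num m' \<le> b)))"

definition received_from_all :: "('a, 'v) config \<Rightarrow> 'a \<Rightarrow> kind \<Rightarrow> nat \<Rightarrow> 'a set \<Rightarrow> bool" where
  "received_from_all \<kappa> p k b Q \<longleftrightarrow> (\<forall>q\<in>Q. \<exists>w. Msg q p k b w \<in> rcvd (st \<kappa> p))"

end

theory Submission
  imports Defs
begin

text \<open>Once p holds promises from Q, its state dictates an accept to every q \<in> Q it has not yet
  sent one to; being nonfaulty, p becomes available, and a send that is enabled even once must
  occur (fairness: it occurs or is eventually disabled for good; nonfaultiness: it occurs or is
  enabled infinitely often). Messages are never lost, so each accept reaches its nonfaulty acceptor q. The highest
  number q has seen is always the number of a message q has received, so by P2 it is at most b: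
  q accepts and is dictated to vote, and the same argument delivers the vote to p. Received
  messages stay received and Q is finite, so all votes are present at a common index.\<close>

lemma persists_until:
  assumes "P k" and "\<And>n. P n \<Longrightarrow> \<not> E n \<Longrightarrow> P (Suc n)" and "k \<le> n"
  shows "P n \<or> (\<exists>k'. k \<le> k' \<and> k' < n \<and> E k')"
  using assms(3)
proof (induction n)
  case 0
  then show ?case using assms(1) by simp
next
  case (Suc n)
  show ?case
  proof (cases "k = Suc n")
    case True
    then show ?thesis using assms(1) by simp
  next
    case False
    with Suc.prems have "k \<le> n" by simp
    with Suc.IH have "P n \<or> (\<exists>k'. k \<le> k' \<and> k' < n \<and> E k')" by simp
    then show ?thesis
    proof
      assume "P n"
      then show ?thesis using assms(2) \<open>k \<le> n\<close> by (cases "E n") auto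
    qed (use less_SucI in blast)
  qed
qed

lemma rcvd_process [simp]: "rcvd (process Acc x m s) = insert m (rcvd s)"
  by (simp add: process_def Let_def)

lemma sent2a_process [simp]: "sent2a (process Acc x m s) = sent2a s"
  by (simp add: process_def Let_def)

lemma out_process_mono: "out s \<subseteq> out (process Acc x m s)"
  by (auto simp: process_def Let_def)

lemma hi_process: "hi (process Acc x m s) \<in> {hi s, Some (num m)}"
  by (simp add: process_def Let_def)

lemma vote_in_out_process:
  "x \<in> Acc \<Longrightarrow> knd m = K2a \<Longrightarrow> ge_opt (num m) (hi s) \<Longrightarrow>
   Msg x (src m) K2b (num m) (val m) \<in> out (process Acc x m s)"
  by (simp add: process_def Let_def)

lemma choosable_exists:
  assumes "finite (rcvd s)"
  shows "\<exists>v. choosable x s Q b v"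
proof (cases "\<forall>q\<in>Q. \<forall>w. Msg q x K1b b w \<in> rcvd s \<longrightarrow> w = None")
  case True
  then show ?thesis by (auto simp: choosable_def)
next
  case False
  let ?N = "{n. \<exists>q\<in>Q. \<exists>v. Msg q x K1b b (Some (n, v)) \<in> rcvd s}"
  have "?N \<subseteq> (\<lambda>m. fst (the (val m))) ` rcvd s" by force
  then have "finite ?N" using assms finite_subset by blast
  moreover from False have "?N \<noteq> {}" by auto
  ultimately have "Max ?N \<in> ?N" by (rule Max_in)
  then obtain q v where "q \<in> Q" "Msg q x K1b b (Some (Max ?N, v)) \<in> rcvd s" by blast
  moreover have "\<forall>q'\<in>Q. \<forall>n' v'. Msg q' x K1b b (Some (n', v')) \<in> rcvd s \<longrightarrow> n' \<le> Max ?N"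
    using \<open>finite ?N\<close> by (auto intro: Max_ge)
  ultimately show ?thesis unfolding choosable_def by blast
qed

locale synod_path =
  fixes Prop Acc :: "'a set" and T :: "nat \<Rightarrow> ('a, 'v) config" and L :: "nat \<Rightarrow> ('a, 'v) label"
  assumes path: "transition_path Prop Acc T L"
begin

lemma step_at: "step Prop Acc (T n) (L n) (T (Suc n))"
  using path unfolding transition_path_def by blast

lemma initial_st: "st (T 0) x = empty_lstate"
  using path by (simp add: transition_path_def initial_def)

lemma st_step_cases:
  obtains "st (T (Suc n)) x = st (T n) x"
  | m where "L n = Rcv x m" "st (T (Suc n)) x = process Acc x m (st (T n) x)"
  | m where "L n = Snd x m" "dictates Prop Acc (T n) x m"
      "st (T (Suc n)) x = st (after_send Acc (T n) x m) x"
proof (cases "L n")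
  case (Rcv y m)
  then show ?thesis using step_at[of n] that(1) that(2)[of m] by (cases "y = x") auto
next
  case (Snd y m)
  then show ?thesis
    using step_at[of n] that(1) that(3)[of m] by (cases "y = x") (auto simp: after_send_def)
qed (use step_at[of n] that(1) in auto)

lemma rcvd_Suc: "rcvd (st (T n) x) \<subseteq> rcvd (st (T (Suc n)) x)"
  by (cases rule: st_step_cases[of n x]) (auto simp: after_send_def)

lemma rcvd_mono: "n \<le> n' \<Longrightarrow> rcvd (st (T n) x) \<subseteq> rcvd (st (T n') x)"
  using lift_Suc_mono_le[of "\<lambda>n. rcvd (st (T n) x)"] rcvd_Suc by blast

lemma rcvd_finite: "finite (rcvd (st (T n) x))"
proof (induction n)
  case 0
  then show ?case by (simp add: initial_st empty_lstate_def)
next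
  case (Suc n)
  then show ?case by (cases rule: st_step_cases[of n x]) (auto simp: after_send_def)
qed

lemma rcvd_after_Rcv: "L k = Rcv x m \<Longrightarrow> m \<in> rcvd (st (T (Suc k)) x)"
  using step_at[of k] by auto

lemma mu_after_Snd: "L k = Snd x m \<Longrightarrow> m \<in># mu (T (Suc k))"
  using step_at[of k] by (auto simp: after_send_def)

lemma mu_Suc: "m \<in># mu (T n) \<Longrightarrow> L n \<noteq> Rcv (dst m) m \<Longrightarrow> m \<in># mu (T (Suc n))"
  using step_at[of n] by (cases "L n") (auto simp: after_send_def in_diff_count)

lemma out_Suc: "m \<in> out (st (T n) x) \<Longrightarrow> L n \<noteq> Snd x m \<Longrightarrow> m \<in> out (st (T (Suc n)) x)"
  by (cases rule: st_step_cases[of n x]) (auto simp: after_send_def dest: subsetD[OF out_process_mono])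

lemma hi_received: "hi (st (T n) x) = Some h \<Longrightarrow> \<exists>m\<in>rcvd (st (T n) x). num m = h"
proof (induction n)
  case 0
  then show ?case by (simp add: initial_st empty_lstate_def)
next
  case (Suc n)
  then show ?case
  proof (cases rule: st_step_cases[of n x])
    case (2 m)
    then show ?thesis using Suc hi_process[of Acc x m "st (T n) x"] by auto
  qed (auto simp: after_send_def split: if_splits)
qed

lemma sent2a_sent:
  "(a, c) \<in> sent2a (st (T n) x) \<Longrightarrow> \<exists>k<n. \<exists>w. L k = Snd x (Msg x a K2a c w)"
proof (induction n)
  case 0
  then show ?case by (simp add: initial_st empty_lstate_def)
next
  case (Suc n)
  then show ?case
  proof (cases rule: st_step_cases[of n x])
    case (3 m)
    have "(a, c) \<in> sent2a (st (T n) x) \<or> (x \<notin> Acc \<and> (a, c) = (dst m, num m))"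
      using 3(3) Suc.prems by (auto simp: after_send_def split: if_splits)
    then show ?thesis
    proof
      assume "x \<notin> Acc \<and> (a, c) = (dst m, num m)"
      then obtain v where "m = Msg x a K2a c (Some (c, v))"
        using 3(2) by (auto simp: dictates_def)
      then show ?thesis using 3(1) by blast
    qed (use Suc.IH less_SucI in blast)
  qed (use Suc in \<open>auto intro: less_SucI\<close>)
qed

lemma received_from_all_mono:
  "received_from_all (T n) p k b Q \<Longrightarrow> n \<le> n' \<Longrightarrow> received_from_all (T n') p k b Q"
  unfolding received_from_all_def using rcvd_mono by blast

lemma received_from_all_finite: "received_from_all (T n) p k b Q \<Longrightarrow> finite Q"
proof -
  assume "received_from_all (T n) p k b Q"
  then have "Q \<subseteq> src ` rcvd (st (T n) p)" unfolding received_from_all_def by force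
  then show "finite Q" using rcvd_finite finite_surj by blast
qed

lemma accept_dictated:
  assumes "p \<in> Prop" "quorum Acc Q" "q \<in> Q" "received_from_all (T n) p K1b b Q"
    "(q, b) \<notin> sent2a (st (T n) p)"
  shows "\<exists>v. dictates Prop Acc (T n) p (Msg p q K2a b (Some (b, v)))"
  using assms choosable_exists[OF rcvd_finite[of n p]]
  unfolding dictates_def received_from_all_def by blast

lemma vote_in_out_after_accept:
  assumes "q \<in> Acc" and "P1_P2 Acc T L b" and "L k = Rcv q (Msg p q K2a b w)"
  shows "Msg q p K2b b w \<in> out (st (T (Suc k)) q)"
proof -
  have "\<forall>m\<in>rcvd (st (T k) q). num m \<le> b"
    using assms unfolding P1_P2_def by fastforce
  then have "ge_opt b (hi (st (T k) q))"
    using hi_received[of k q] by (auto simp: ge_opt_def split: option.split)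
  moreover have "st (T (Suc k)) q = process Acc q (Msg p q K2a b w) (st (T k) q)"
    using step_at[of k] assms(3) by auto
  ultimately show ?thesis
    using vote_in_out_process[of q Acc "Msg p q K2a b w"] assms(1) by simp
qed

end

locale fair_synod_path = synod_path +
  assumes fair: "fair_transition_path Prop Acc T L"
begin

lemma snd_enabled_occurs:
  assumes "nonfaulty Prop Acc T L x" and "snd_enabled Prop Acc (T j) x m"
  shows "\<exists>k\<ge>j. L k = Snd x m"
proof -
  from assms have "(\<exists>k\<ge>j. L k = Snd x m) \<or> (\<forall>n. \<exists>k\<ge>n. snd_enabled Prop Acc (T k) x m)"
    unfolding nonfaulty_def by blast
  moreover from fair assms(2)
  have "(\<exists>k\<ge>j. L k = Snd x m) \<or> (\<exists>k\<ge>j. \<forall>n\<ge>k. \<not> snd_enabled Prop Acc (T n) x m)"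
    unfolding fair_transition_path_def by blast
  ultimately show ?thesis by blast
qed

lemma rcv_enabled_occurs:
  assumes "nonfaulty Prop Acc T L x" and "rcv_enabled (T j) x m"
  shows "\<exists>k\<ge>j. L k = Rcv x m"
proof -
  from assms have "(\<exists>k\<ge>j. L k = Rcv x m) \<or> (\<forall>n. \<exists>k\<ge>n. rcv_enabled (T k) x m)"
    unfolding nonfaulty_def by blast
  moreover from fair assms(2)
  have "(\<exists>k\<ge>j. L k = Rcv x m) \<or> (\<exists>k\<ge>j. \<forall>n\<ge>k. \<not> rcv_enabled (T n) x m)"
    unfolding fair_transition_path_def by blast
  ultimately show ?thesis by blast
qed

lemma en_route_delivered:
  assumes "nonfaulty Prop Acc T L (dst m)" and "m \<in># mu (T k)"
  shows "\<exists>k'\<ge>k. L k' = Rcv (dst m) m"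
proof -
  obtain j where j: "j \<ge> k" "dst m \<in> avail (T j)"
    using assms unfolding nonfaulty_def by blast
  have "m \<in># mu (T j) \<or> (\<exists>k'. k \<le> k' \<and> k' < j \<and> L k' = Rcv (dst m) m)"
    by (rule persists_until[where E = "\<lambda>n. L n = Rcv (dst m) m"]) (use assms(2) mu_Suc j in auto)
  then show ?thesis
  proof
    assume "m \<in># mu (T j)"
    then have "rcv_enabled (T j) (dst m) m" using j by (simp add: rcv_enabled_def)
    then show ?thesis using rcv_enabled_occurs[OF assms(1)] j(1) order_trans by blast
  qed auto
qed

lemma sent_delivered:
  "L k = Snd x m \<Longrightarrow> nonfaulty Prop Acc T L (dst m) \<Longrightarrow> \<exists>k'. L k' = Rcv (dst m) m"
  using en_route_delivered[OF _ mu_after_Snd] by blast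

lemma out_eventually_sent:
  assumes "x \<in> Acc" and "nonfaulty Prop Acc T L x" and "m \<in> out (st (T k) x)"
  shows "\<exists>k'\<ge>k. L k' = Snd x m"
proof -
  obtain j where j: "j \<ge> k" "x \<in> avail (T j)"
    using assms unfolding nonfaulty_def dictates_def by blast
  have "m \<in> out (st (T j) x) \<or> (\<exists>k'. k \<le> k' \<and> k' < j \<and> L k' = Snd x m)"
    by (rule persists_until[where E = "\<lambda>n. L n = Snd x m"]) (use assms(3) out_Suc j in auto)
  then show ?thesis
  proof
    assume "m \<in> out (st (T j) x)"
    then have "snd_enabled Prop Acc (T j) x m"
      using j assms(1) by (simp add: snd_enabled_def dictates_def)
    then show ?thesis using snd_enabled_occurs[OF assms(2)] j(1) order_trans by blast
  qed auto
qed

lemma accept_sent: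
  assumes "p \<in> Prop" and "nonfaulty Prop Acc T L p" and "quorum Acc Q" and "q \<in> Q"
    and "received_from_all (T i) p K1b b Q"
  shows "\<exists>k w. L k = Snd p (Msg p q K2a b w)"
proof (rule ccontr)
  assume never: "\<not> (\<exists>k w. L k = Snd p (Msg p q K2a b w))"
  then have unsent: "(q, b) \<notin> sent2a (st (T n) p)" for n
    using sent2a_sent by blast
  obtain m where "dictates Prop Acc (T i) p m"
    using accept_dictated[OF assms(1,3,4,5) unsent] by blast
  then obtain j where "j \<ge> i" and avail: "p \<in> avail (T j)"
    using assms(2) unfolding nonfaulty_def by blast
  \<comment> \<open>the value is chosen afresh at j: promises arriving after i may change what is choosable\<close>
  then obtain v where "dictates Prop Acc (T j) p (Msg p q K2a b (Some (b, v)))"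
    using accept_dictated[OF assms(1,3,4) received_from_all_mono[OF assms(5)] unsent] by blast
  then show False
    using snd_enabled_occurs[OF assms(2)] avail never by (auto simp: snd_enabled_def)
qed

lemma vote_received:
  assumes "p \<in> Prop" and "nonfaulty Prop Acc T L p" and "quorum Acc Q" and "q \<in> Q"
    and "nonfaulty Prop Acc T L q" and "P1_P2 Acc T L b"
    and "received_from_all (T i) p K1b b Q"
  shows "\<exists>j w. Msg q p K2b b w \<in> rcvd (st (T j) p)"
proof -
  have "q \<in> Acc" using assms(3,4) by (auto simp: quorum_def)
  obtain k w where "L k = Snd p (Msg p q K2a b w)"
    using accept_sent[OF assms(1-4,7)] by blast
  then obtain k1 where "L k1 = Rcv q (Msg p q K2a b w)"
    using sent_delivered assms(5) by fastforce
  then have "Msg q p K2b b w \<in> out (st (T (Suc k1)) q)"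
    using vote_in_out_after_accept[OF \<open>q \<in> Acc\<close> assms(6)] by blast
  then obtain k2 where "L k2 = Snd q (Msg q p K2b b w)"
    using out_eventually_sent[OF \<open>q \<in> Acc\<close> assms(5)] by blast
  then obtain k3 where "L k3 = Rcv p (Msg q p K2b b w)"
    using sent_delivered assms(2) by fastforce
  then show ?thesis
    using rcvd_after_Rcv by blast
qed

end

theorem lemma2:
  fixes Prop Acc :: "'a set" and T :: "nat \<Rightarrow> ('a, 'v) config"
    and L :: "nat \<Rightarrow> ('a, 'v) label" and p :: 'a and Q :: "'a set"
    and b :: nat and i :: nat
  assumes "Prop \<inter> Acc = {}" and "Prop \<union> Acc = UNIV"
    and "fair_transition_path Prop Acc T L"
    and "p \<in> Prop" and "nonfaulty Prop Acc T L p"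
    and "quorum Acc Q" and "\<forall>q\<in>Q. nonfaulty Prop Acc T L q"
    and "P1_P2 Acc T L b"
    and "received_from_all (T i) p K1b b Q"
  shows "\<exists>j. received_from_all (T j) p K2b b Q"
proof -
  interpret fair_synod_path Prop Acc T L
    using assms(3) by unfold_locales (simp_all add: fair_transition_path_def)
  let ?voted = "\<lambda>j q. \<exists>w. Msg q p K2b b w \<in> rcvd (st (T j) p)"
  have voted_eventually: "eventually (\<lambda>j. ?voted j q) sequentially" if q: "q \<in> Q" for q
  proof -
    obtain j w where w: "Msg q p K2b b w \<in> rcvd (st (T j) p)"
      using vote_received[OF assms(4,5,6) q assms(7)[rule_format, OF q] assms(8,9)] by blast
    show ?thesis
    proof (rule eventually_sequentiallyI)
      show "?voted n q" if "j \<le> n" for n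
        using w rcvd_mono[OF that] by blast
    qed
  qed
  moreover have "finite Q"
    using received_from_all_finite[OF assms(9)] .
  ultimately have "eventually (\<lambda>j. \<forall>q\<in>Q. ?voted j q) sequentially"
    by (simp add: eventually_ball_finite_distrib)
  then obtain j where "\<forall>q\<in>Q. ?voted j q"
    unfolding eventually_sequentially by blast
  then show ?thesis
    unfolding received_from_all_def by blast
qed

end
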